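(* Let $n\ge 3$ and let $\Sigma$ be an $n\times n$ matrix with entries $\pm1$; let $\mu(\Sigma)$ denote the number of entries of $\Sigma$ equal to $-1$. (i) If $n=2m+1$ is odd and $\mu(\Sigma)\ge mn-(m-1)$, then there is a matrix $\Sigma'$ equivalent to $\Sigma$ with $\mu(\Sigma')<\mu(\Sigma)$. (ii) If $n=2m$ is even and $\mu(\Sigma)\ge mn-m$, then there is a matrix $\Sigma'$ equivalent to $\Sigma$ with $\mu(\Sigma')<\mu(\Sigma)$.
   Context: Two $r\times n$ matrices with entries $\pm1$ are equivalent if one is obtained from the other by a finite succession of the operations: interchanging two rows or two columns; negating a row or a column. *)

theory Defs
  imports Main
begin

text \<open>An r x n matrix is represented as a function nat => nat => int,
  with rows indexed by 0..<r and columns by 0..<n; entries outside that range are 0.\<close>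

definition pm1_matrix :: "nat \<Rightarrow> nat \<Rightarrow> (nat \<Rightarrow> nat \<Rightarrow> int) \<Rightarrow> bool" where
  "pm1_matrix r n M \<longleftrightarrow>
     (\<forall>i j. (i < r \<and> j < n \<longrightarrow> M i j = 1 \<or> M i j = -1) \<and>
            (\<not> (i < r \<and> j < n) \<longrightarrow> M i j = 0))"

definition swap_idx :: "nat \<Rightarrow> nat \<Rightarrow> nat \<Rightarrow> nat" where
  "swap_idx a b x = (if x = a then b else if x = b then a else x)"

definition swap_rows :: "nat \<Rightarrow> nat \<Rightarrow> (nat \<Rightarrow> nat \<Rightarrow> int) \<Rightarrow> (nat \<Rightarrow> nat \<Rightarrow> int)" where
  "swap_rows a b M = (\<lambda>i j. M (swap_idx a b i) j)"

definition swap_cols :: "nat \<Rightarrow> nat \<Rightarrow> (nat \<Rightarrow> nat \<Rightarrow> int) \<Rightarrow> (nat \<Rightarrow> nat \<Rightarrow> int)" where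
  "swap_cols a b M = (\<lambda>i j. M i (swap_idx a b j))"

definition neg_row :: "nat \<Rightarrow> (nat \<Rightarrow> nat \<Rightarrow> int) \<Rightarrow> (nat \<Rightarrow> nat \<Rightarrow> int)" where
  "neg_row a M = (\<lambda>i j. if i = a then - M i j else M i j)"

definition neg_col :: "nat \<Rightarrow> (nat \<Rightarrow> nat \<Rightarrow> int) \<Rightarrow> (nat \<Rightarrow> nat \<Rightarrow> int)" where
  "neg_col a M = (\<lambda>i j. if j = a then - M i j else M i j)"

inductive elem_op :: "nat \<Rightarrow> nat \<Rightarrow> (nat \<Rightarrow> nat \<Rightarrow> int) \<Rightarrow> (nat \<Rightarrow> nat \<Rightarrow> int) \<Rightarrow> bool"
  for r n where
  "a < r \<Longrightarrow> b < r \<Longrightarrow> elem_op r n M (swap_rows a b M)"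
| "a < n \<Longrightarrow> b < n \<Longrightarrow> elem_op r n M (swap_cols a b M)"
| "a < r \<Longrightarrow> elem_op r n M (neg_row a M)"
| "a < n \<Longrightarrow> elem_op r n M (neg_col a M)"

definition pm1_equiv :: "nat \<Rightarrow> nat \<Rightarrow> (nat \<Rightarrow> nat \<Rightarrow> int) \<Rightarrow> (nat \<Rightarrow> nat \<Rightarrow> int) \<Rightarrow> bool" where
  "pm1_equiv r n M M' \<longleftrightarrow> (elem_op r n)\<^sup>*\<^sup>* M M'"

definition mu :: "nat \<Rightarrow> nat \<Rightarrow> (nat \<Rightarrow> nat \<Rightarrow> int) \<Rightarrow> nat" where
  "mu r n M = card {(i, j). i < r \<and> j < n \<and> M i j = -1}"

end

theory Submission
  imports Defs
begin

text \<open>Negating the rows in a set R and the columns in a set C changes the entry sum by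
  -2 (row sums over R + column sums over C - 2 * entries of R x C), and 2 mu = n^2 - entry sum.
  So if no such switching lowers mu, every row and column sum is nonnegative, and a positive
  entry, or a pair of positive entries in one column, forces the corresponding row and column
  sums to be large. For odd n this pushes the entry sum above 2n - 3: a column of sum 1 must
  exist and two of its positive entries lie in rows of sum 1. For even n it pushes the entry
  sum above n: two rows of sum 0 are forced to have the same positive entries, and switching
  both rows together with those columns would lower mu.\<close>

lemma sum_pm1_eq:
  fixes f :: "'a \<Rightarrow> int"
  assumes "finite A" and "\<forall>k\<in>A. f k = 1 \<or> f k = -1"
  shows "sum f A = int (card A) - 2 * int (card {k\<in>A. f k = -1})"
proof -
  have "sum f A = (\<Sum>k\<in>A. 1 - 2 * of_bool (f k = -1))"
    using assms(2) by (intro sum.cong) auto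
  also have "\<dots> = int (card A) - 2 * int (card (A \<inter> {k. f k = -1}))"
    using assms(1) by (simp add: sum_subtractf sum_distrib_left[symmetric])
  finally show ?thesis by (simp add: Int_def conj_commute)
qed

lemma card_pm1_ones:
  fixes f :: "'a \<Rightarrow> int"
  assumes "finite A" and "\<forall>k\<in>A. f k = 1 \<or> f k = -1"
  shows "card {k\<in>A. f k = 1} = card A - card {k\<in>A. f k = -1}"
proof -
  have "{k\<in>A. f k = 1} = A - {k\<in>A. f k = -1}" using assms(2) by auto
  then show ?thesis using assms(1) by (simp add: card_Diff_subset)
qed

lemma mult_card_le_sum:
  fixes f :: "'a \<Rightarrow> 'b::linordered_idom"
  assumes "finite A" and "\<forall>x\<in>A. 0 \<le> f x" and "0 \<le> t"
  shows "t * of_nat (card {x\<in>A. t \<le> f x}) \<le> sum f A"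
proof -
  have "t * of_nat (card {x\<in>A. t \<le> f x}) = (\<Sum>x\<in>{x\<in>A. t \<le> f x}. t)" by simp
  also have "\<dots> \<le> (\<Sum>x\<in>{x\<in>A. t \<le> f x}. f x)" by (rule sum_mono) simp
  also have "\<dots> \<le> sum f A" using assms by (intro sum_mono2) auto
  finally show ?thesis .
qed

lemma card_ge_2E:
  assumes "2 \<le> card A"
  obtains a b where "a \<in> A" "b \<in> A" "a \<noteq> b"
  using obtain_subset_with_card_n[OF assms] by (metis card_2_iff insertCI subsetD)

definition row_sum :: "nat \<Rightarrow> (nat \<Rightarrow> nat \<Rightarrow> int) \<Rightarrow> nat \<Rightarrow> int" where
  "row_sum n M i = (\<Sum>j<n. M i j)"

definition col_sum :: "nat \<Rightarrow> (nat \<Rightarrow> nat \<Rightarrow> int) \<Rightarrow> nat \<Rightarrow> int" where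
  "col_sum r M j = (\<Sum>i<r. M i j)"

definition entry_sum :: "nat \<Rightarrow> nat \<Rightarrow> (nat \<Rightarrow> nat \<Rightarrow> int) \<Rightarrow> int" where
  "entry_sum r n M = (\<Sum>i<r. \<Sum>j<n. M i j)"

definition switch :: "nat set \<Rightarrow> nat set \<Rightarrow> (nat \<Rightarrow> nat \<Rightarrow> int) \<Rightarrow> nat \<Rightarrow> nat \<Rightarrow> int" where
  "switch R C M = (\<lambda>i j. (if i \<in> R then -1 else 1) * (if j \<in> C then -1 else 1) * M i j)"

lemma entry_sum_eq_sum_row_sum: "entry_sum r n M = (\<Sum>i<r. row_sum n M i)"
  unfolding entry_sum_def row_sum_def ..

lemma entry_sum_eq_sum_col_sum: "entry_sum r n M = (\<Sum>j<n. col_sum r M j)"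
  unfolding entry_sum_def col_sum_def by (rule sum.swap)

lemma row_sum_pm1:
  assumes "pm1_matrix r n M" and "i < r"
  shows "row_sum n M i = int n - 2 * int (card {j\<in>{..<n}. M i j = -1})"
  using sum_pm1_eq[of "{..<n}" "M i"] assms by (auto simp: row_sum_def pm1_matrix_def)

lemma col_sum_pm1:
  assumes "pm1_matrix r n M" and "j < n"
  shows "col_sum r M j = int r - 2 * int (card {i\<in>{..<r}. M i j = -1})"
  using sum_pm1_eq[of "{..<r}" "\<lambda>i. M i j"] assms by (auto simp: col_sum_def pm1_matrix_def)

lemma mu_entry_sum:
  assumes "pm1_matrix r n M"
  shows "2 * int (mu r n M) = int r * int n - entry_sum r n M"
proof -
  have "{(i, j). i < r \<and> j < n \<and> M i j = -1} = (SIGMA i:{..<r}. {j\<in>{..<n}. M i j = -1})"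
    by auto
  then have "mu r n M = (\<Sum>i<r. card {j\<in>{..<n}. M i j = -1})"
    unfolding mu_def by (simp add: card_SigmaI)
  then show ?thesis
    using assms by (simp add: entry_sum_eq_sum_row_sum row_sum_pm1 sum_subtractf sum_distrib_left)
qed

lemma row_sum_parity: "pm1_matrix r n M \<Longrightarrow> i < r \<Longrightarrow> even (row_sum n M i - int n)"
  by (simp add: row_sum_pm1)

lemma col_sum_parity: "pm1_matrix r n M \<Longrightarrow> j < n \<Longrightarrow> even (col_sum r M j - int r)"
  by (simp add: col_sum_pm1)

lemma switch_empty [simp]: "switch {} {} M = M"
  unfolding switch_def by simp

lemma switch_insert_row: "a \<notin> R \<Longrightarrow> switch (insert a R) C M = neg_row a (switch R C M)"
  unfolding switch_def neg_row_def by (intro ext) auto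

lemma switch_insert_col: "a \<notin> C \<Longrightarrow> switch {} (insert a C) M = neg_col a (switch {} C M)"
  unfolding switch_def neg_col_def by (intro ext) auto

lemma pm1_equiv_switch_cols:
  assumes "finite C" and "C \<subseteq> {..<n}"
  shows "pm1_equiv r n M (switch {} C M)"
  using assms
proof (induction C rule: finite_induct)
  case empty then show ?case by (simp add: pm1_equiv_def)
next
  case (insert a C)
  then show ?case
    unfolding pm1_equiv_def switch_insert_col[OF insert(2)]
    by (auto intro: rtranclp.rtrancl_into_rtrancl elem_op.intros(4))
qed

lemma pm1_equiv_switch_rows:
  assumes "finite R" and "R \<subseteq> {..<r}"
  shows "pm1_equiv r n (switch {} C M) (switch R C M)"
  using assms
proof (induction R rule: finite_induct)
  case empty then show ?case by (simp add: pm1_equiv_def)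
next
  case (insert a R)
  then show ?case
    unfolding pm1_equiv_def switch_insert_row[OF insert(2)]
    by (auto intro: rtranclp.rtrancl_into_rtrancl elem_op.intros(3))
qed

lemma pm1_equiv_switch:
  assumes "R \<subseteq> {..<r}" and "C \<subseteq> {..<n}"
  shows "pm1_equiv r n M (switch R C M)"
  using pm1_equiv_switch_cols[of C n r M] pm1_equiv_switch_rows[of R r n C M] assms
  by (auto simp: pm1_equiv_def finite_subset)

lemma pm1_matrix_switch: "pm1_matrix r n M \<Longrightarrow> pm1_matrix r n (switch R C M)"
  unfolding pm1_matrix_def switch_def by auto

lemma entry_sum_switch:
  assumes "R \<subseteq> {..<r}" and "C \<subseteq> {..<n}"
  shows "entry_sum r n (switch R C M) = entry_sum r n M - 2 * (\<Sum>i\<in>R. row_sum n M i)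
           - 2 * (\<Sum>j\<in>C. col_sum r M j) + 4 * (\<Sum>i\<in>R. \<Sum>j\<in>C. M i j)"
proof -
  have R: "{..<r} \<inter> R = R" and C: "{..<n} \<inter> C = C" using assms by auto
  have sign: "switch R C M i j = M i j - 2 * (M i j * of_bool (i \<in> R)) - 2 * (M i j * of_bool (j \<in> C))
        + 4 * (M i j * of_bool (j \<in> C) * of_bool (i \<in> R))" for i j
    by (simp add: switch_def)
  have rows: "(\<Sum>i<r. \<Sum>j<n. M i j * of_bool (i \<in> R)) = (\<Sum>i\<in>R. row_sum n M i)"
    by (simp add: sum_distrib_right[symmetric] R row_sum_def)
  have cols: "(\<Sum>i<r. \<Sum>j<n. M i j * of_bool (j \<in> C)) = (\<Sum>j\<in>C. col_sum r M j)"
    by (simp add: sum.swap[of _ "{..<r}"] sum_distrib_right[symmetric] C col_sum_def)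
  have both: "(\<Sum>i<r. \<Sum>j<n. M i j * of_bool (j \<in> C) * of_bool (i \<in> R))
      = (\<Sum>i\<in>R. \<Sum>j\<in>C. M i j)"
    by (simp add: sum_distrib_right[symmetric] R C)
  show ?thesis
    unfolding entry_sum_def sign
    by (simp only: sum.distrib sum_subtractf sum_distrib_left[symmetric] rows cols both)
qed

text \<open>By entry_sum_switch and mu_entry_sum, this says that negating the rows R and the
  columns C never lowers mu.\<close>

definition switching_minimal :: "nat \<Rightarrow> nat \<Rightarrow> (nat \<Rightarrow> nat \<Rightarrow> int) \<Rightarrow> bool" where
  "switching_minimal r n M \<longleftrightarrow> (\<forall>R\<subseteq>{..<r}. \<forall>C\<subseteq>{..<n}.
     2 * (\<Sum>i\<in>R. \<Sum>j\<in>C. M i j) \<le> (\<Sum>i\<in>R. row_sum n M i) + (\<Sum>j\<in>C. col_sum r M j))"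

lemma fewer_minus_ones_if_not_switching_minimal:
  assumes "pm1_matrix r n M" and "\<not> switching_minimal r n M"
  shows "\<exists>M'. pm1_equiv r n M M' \<and> mu r n M' < mu r n M"
proof -
  obtain R C where RC: "R \<subseteq> {..<r}" "C \<subseteq> {..<n}"
    and gain: "(\<Sum>i\<in>R. row_sum n M i) + (\<Sum>j\<in>C. col_sum r M j) < 2 * (\<Sum>i\<in>R. \<Sum>j\<in>C. M i j)"
    using assms(2) unfolding switching_minimal_def by auto
  have "2 * int (mu r n (switch R C M)) < 2 * int (mu r n M)"
    using mu_entry_sum[OF assms(1)] mu_entry_sum[OF pm1_matrix_switch[OF assms(1), of R C]]
      entry_sum_switch[OF RC, of M] gain
    by linarith
  then show ?thesis using pm1_equiv_switch[OF RC] by auto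
qed

lemma switching_minimalD:
  "switching_minimal r n M \<Longrightarrow> R \<subseteq> {..<r} \<Longrightarrow> C \<subseteq> {..<n} \<Longrightarrow>
   2 * (\<Sum>i\<in>R. \<Sum>j\<in>C. M i j) \<le> (\<Sum>i\<in>R. row_sum n M i) + (\<Sum>j\<in>C. col_sum r M j)"
  unfolding switching_minimal_def by blast

context
  fixes r n :: nat and M :: "nat \<Rightarrow> nat \<Rightarrow> int"
  assumes min: "switching_minimal r n M"
begin

lemma switching_minimal_row_sum_nonneg: "i < r \<Longrightarrow> 0 \<le> row_sum n M i"
  using switching_minimalD[OF min, of "{i}" "{}"] by simp

lemma switching_minimal_col_sum_nonneg: "j < n \<Longrightarrow> 0 \<le> col_sum r M j"
  using switching_minimalD[OF min, of "{}" "{j}"] by simp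

lemma switching_minimal_entry:
  "i < r \<Longrightarrow> j < n \<Longrightarrow> M i j = 1 \<Longrightarrow> 2 \<le> row_sum n M i + col_sum r M j"
  using switching_minimalD[OF min, of "{i}" "{j}"] by simp

lemma switching_minimal_entry_pair:
  assumes "i1 < r" "i2 < r" "i1 \<noteq> i2" "j < n" "M i1 j = 1" "M i2 j = 1"
  shows "4 \<le> row_sum n M i1 + row_sum n M i2 + col_sum r M j"
  using switching_minimalD[OF min, of "{i1, i2}" "{j}"] assms by simp

text \<open>Switching row i together with its positive columns shows that these columns already
  carry the whole entry sum, so every other column sum vanishes.\<close>

lemma switching_minimal_col_sum_eq_0:
  assumes pm: "pm1_matrix r n M" and i: "i < r" and row: "row_sum n M i = 0"
    and T: "entry_sum r n M \<le> int n" and j: "j < n" and minus: "M i j = -1"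
  shows "col_sum r M j = 0"
proof -
  define P where "P = {k\<in>{..<n}. M i k = 1}"
  have pm_row: "\<forall>k\<in>{..<n}. M i k = 1 \<or> M i k = -1" using pm i by (simp add: pm1_matrix_def)
  have cardP: "2 * int (card P) = int n"
    using row row_sum_pm1[OF pm i] card_pm1_ones[OF _ pm_row] unfolding P_def by simp
  have "(\<Sum>k\<in>P. M i k) = int (card P)" unfolding P_def by simp
  moreover have "P \<subseteq> {..<n}" unfolding P_def by auto
  ultimately have "2 * int (card P) \<le> (\<Sum>k\<in>P. col_sum r M k)"
    using switching_minimalD[OF min, of "{i}" P] i row by simp
  also have "\<dots> + col_sum r M j = (\<Sum>k\<in>insert j P. col_sum r M k)"
    using minus by (simp add: P_def)
  also have "\<dots> \<le> (\<Sum>k<n. col_sum r M k)"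
    using j switching_minimal_col_sum_nonneg by (intro sum_mono2) (auto simp: P_def)
  finally show ?thesis
    using T cardP switching_minimal_col_sum_nonneg[OF j] by (simp add: entry_sum_eq_sum_col_sum)
qed

end

lemma entry_sum_gt_if_switching_minimal_odd:
  assumes pm: "pm1_matrix n n M" and min: "switching_minimal n n M" and n: "n = 2 * m + 1"
  shows "2 * int n - 3 < entry_sum n n M"
proof (rule ccontr)
  assume "\<not> ?thesis"
  then have T: "entry_sum n n M \<le> 2 * int n - 3" by simp
  have "odd n" using n by simp
  have row_pos: "1 \<le> row_sum n M i" if "i < n" for i
    using row_sum_parity[OF pm that] switching_minimal_row_sum_nonneg[OF min that] \<open>odd n\<close>
    by presburger
  have col_pos: "1 \<le> col_sum n M j" if "j < n" for j
    using col_sum_parity[OF pm that] switching_minimal_col_sum_nonneg[OF min that] \<open>odd n\<close>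
    by presburger
  have "\<not> (\<forall>j<n. 3 \<le> col_sum n M j)"
  proof
    assume "\<forall>j<n. 3 \<le> col_sum n M j"
    then have "(\<Sum>j<n. 3) \<le> entry_sum n n M"
      unfolding entry_sum_eq_sum_col_sum by (intro sum_mono) auto
    with T show False by simp
  qed
  then obtain j where j: "j < n" "col_sum n M j < 3" by (auto simp: not_le)
  have "col_sum n M j = 1"
    using col_sum_parity[OF pm j(1)] col_pos[OF j(1)] j(2) \<open>odd n\<close> by presburger
  then have minus_j: "card {i\<in>{..<n}. M i j = -1} = m"
    using col_sum_pm1[OF pm j(1)] n by simp
  define P where "P = {i\<in>{..<n}. M i j = 1}"
  have cardP: "card P = m + 1"
    using card_pm1_ones[of "{..<n}" "\<lambda>i. M i j"] pm j(1) minus_j n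
    by (simp add: P_def pm1_matrix_def)
  define B where "B = {i\<in>{..<n}. 2 \<le> row_sum n M i - 1}"
  have "2 * int (card B) \<le> (\<Sum>i<n. row_sum n M i - 1)"
    unfolding B_def by (rule mult_card_le_sum) (auto dest: row_pos)
  also have "\<dots> = entry_sum n n M - int n"
    by (simp add: sum_subtractf entry_sum_eq_sum_row_sum)
  finally have "card B + 1 \<le> m" using T n by simp
  moreover have "card P - card B \<le> card (P - B)"
    by (rule diff_card_le_card_Diff) (simp add: B_def)
  ultimately have "2 \<le> card (P - B)" using cardP by linarith
  then obtain i1 i2 where i: "i1 \<in> P - B" "i2 \<in> P - B" "i1 \<noteq> i2" by (rule card_ge_2E)
  have "row_sum n M i = 1" if "i \<in> P - B" for i
    using that row_sum_parity[OF pm, of i] row_pos[of i] \<open>odd n\<close>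
    unfolding P_def B_def by simp presburger
  with i have "row_sum n M i1 + row_sum n M i2 + col_sum n M j < 4"
    using \<open>col_sum n M j = 1\<close> by simp
  moreover have "4 \<le> row_sum n M i1 + row_sum n M i2 + col_sum n M j"
    using switching_minimal_entry_pair[OF min] i j(1) unfolding P_def by simp
  ultimately show False by simp
qed

lemma entry_sum_gt_if_switching_minimal_even:
  assumes pm: "pm1_matrix n n M" and min: "switching_minimal n n M" and n: "n = 2 * m" and m: "2 \<le> m"
  shows "int n < entry_sum n n M"
proof (rule ccontr)
  assume "\<not> ?thesis"
  then have T: "entry_sum n n M \<le> int n" by simp
  have "even n" using n by simp
  define B where "B = {i\<in>{..<n}. 2 \<le> row_sum n M i}"
  have "2 * int (card B) \<le> entry_sum n n M"
    unfolding B_def entry_sum_eq_sum_row_sum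
    by (rule mult_card_le_sum) (auto dest: switching_minimal_row_sum_nonneg[OF min])
  then have "card B \<le> m" using T n by simp
  moreover have "card ({..<n} - B) = n - card B" by (subst card_Diff_subset) (auto simp: B_def)
  ultimately have "2 \<le> card ({..<n} - B)" using m n by simp
  then obtain i0 i1 where i: "i0 \<in> {..<n} - B" "i1 \<in> {..<n} - B" "i0 \<noteq> i1"
    by (rule card_ge_2E)
  have zero: "row_sum n M i = 0" if "i \<in> {..<n} - B" for i
    using that row_sum_parity[OF pm, of i] switching_minimal_row_sum_nonneg[OF min, of i] \<open>even n\<close>
    unfolding B_def by simp presburger
  have same_ones: "M i1 j = 1" if "j < n" "M i0 j = 1" for j
  proof (rule ccontr)
    assume "M i1 j \<noteq> 1"
    then have "M i1 j = -1" using pm i(2) that(1) by (auto simp: pm1_matrix_def)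
    then have "col_sum n M j = 0"
      using switching_minimal_col_sum_eq_0[OF min pm _ zero T that(1)] i(2) by blast
    moreover have "2 \<le> row_sum n M i0 + col_sum n M j"
      using switching_minimal_entry[OF min _ that] i(1) by simp
    ultimately show False using zero[OF i(1)] by simp
  qed
  define P where "P = {j\<in>{..<n}. M i0 j = 1}"
  have "card P = m"
    using row_sum_pm1[OF pm, of i0] zero[OF i(1)] card_pm1_ones[of "{..<n}" "M i0"] pm i(1) n
    by (simp add: P_def pm1_matrix_def)
  moreover have "(\<Sum>j\<in>P. M i1 j) = (\<Sum>j\<in>P. M i0 j)" "(\<Sum>j\<in>P. M i0 j) = int (card P)"
    by (simp_all add: P_def same_ones)
  ultimately have "4 * int m = 2 * (\<Sum>i\<in>{i0, i1}. \<Sum>j\<in>P. M i j)" using i(3) by simp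
  also have "\<dots> \<le> (\<Sum>j\<in>P. col_sum n M j)"
    using switching_minimalD[OF min, of "{i0, i1}" P] i zero by (simp add: P_def subset_eq)
  also have "\<dots> \<le> entry_sum n n M"
    unfolding entry_sum_eq_sum_col_sum
    by (rule sum_mono2) (auto simp: P_def intro: switching_minimal_col_sum_nonneg[OF min])
  finally show False using T n m by linarith
qed

theorem proposition3p4:
  fixes n :: nat and S :: "nat \<Rightarrow> nat \<Rightarrow> int"
  assumes "n \<ge> 3" and "pm1_matrix n n S"
  shows "(\<forall>m. n = 2 * m + 1 \<and> mu n n S \<ge> m * n - (m - 1) \<longrightarrow>
            (\<exists>S'. pm1_equiv n n S S' \<and> mu n n S' < mu n n S))
       \<and> (\<forall>m. n = 2 * m \<and> mu n n S \<ge> m * n - m \<longrightarrow>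
            (\<exists>S'. pm1_equiv n n S S' \<and> mu n n S' < mu n n S))"
proof (intro conjI allI impI; elim conjE;
    rule fewer_minus_ones_if_not_switching_minimal[OF assms(2)]; rule notI)
  fix m assume n: "n = 2 * m + 1" and mu: "m * n - (m - 1) \<le> mu n n S"
    and min: "switching_minimal n n S"
  have "1 \<le> m" "m \<le> m * n" using n assms(1) by simp_all
  then have "m * n - m + 1 \<le> mu n n S" using mu by linarith
  then have "int m * int n - int m + 1 \<le> int (mu n n S)"
    using \<open>m \<le> m * n\<close> by (metis of_nat_diff of_nat_le_iff of_nat_mult of_nat_1 of_nat_add)
  then show False
    using mu_entry_sum[OF assms(2)] entry_sum_gt_if_switching_minimal_odd[OF assms(2) min n] n
    by (simp add: algebra_simps)
next
  fix m assume n: "n = 2 * m" and mu: "m * n - m \<le> mu n n S"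
    and min: "switching_minimal n n S"
  have "2 \<le> m" "m \<le> m * n" using n assms(1) by simp_all
  then have "int m * int n - int m \<le> int (mu n n S)"
    using mu by (metis of_nat_diff of_nat_le_iff of_nat_mult)
  then show False
    using mu_entry_sum[OF assms(2)] n
      entry_sum_gt_if_switching_minimal_even[OF assms(2) min n \<open>2 \<le> m\<close>]
    by (simp add: algebra_simps)
qed

end
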